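(* Let $f$ satisfy conditions (1) and (2b), and let $n\in\mathbb{N}_0$. In the expression \[ 2\pi\int_0^\infty f(r)\,r^{n+1}\sum_{k=0}^\infty(-1)^k\frac{(pr^2)^k}{k!}\,dr \] the order of summation and integration may be reversed, for arbitrary $p\ge0$.
   Context: $f:[0,\infty)\to\mathbb{R}$; $c_n=2\pi\int_0^\infty f(r)\,r^{n+1}dr$. Condition (1): there is a constant $F$ with $0\le f(r)\le F$ for all $r\ge0$, $c_0$ exists and $c_0>0$. Condition (2b): $c_{2n}$ exists for all $n\in\mathbb{N}_0$ and $c_n^{1/n}=o(n^{1/2})$ as $n\to\infty$. *)

theory Defs
  imports "HOL-Analysis.Analysis" "HOL-Library.Landau_Symbols"
begin

definition moment :: "(real \<Rightarrow> real) \<Rightarrow> nat \<Rightarrow> real" where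
  "moment f n = 2 * pi * (LINT r:{0..}|lborel. f r * r ^ (n + 1))"

end

theory Submission
  imports Defs
begin

text \<open>
  The k-th term of the series has absolute integral p^k/k! c_(n+2k)/(2 pi), so by
  dominated convergence for series it suffices that the sum of p^k/k! c_(n+2k)
  converges. The growth condition gives c_m <= (eps sqrt m)^m for large m, and for
  m = n + 2k the estimate sqrt m^m / k! <= n! e^(2n) (e^4)^k turns this into a
  geometric series of ratio p eps^2 e^4 < 1 once eps is small. The moments c_m with
  m odd exist because r^(m+1) <= r^m + r^(m+2).
\<close>

lemma sums_exp_real: "(\<lambda>k. x ^ k / fact k) sums exp (x :: real)"
  using exp_converges[of x] by (simp add: divide_inverse mult.commute)

lemma power_div_fact_le_exp:
  fixes x :: real
  assumes "x \<ge> 0"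
  shows "x ^ k / fact k \<le> exp x"
proof -
  have "(\<Sum>i\<in>{k}. x ^ i / fact i) \<le> (\<Sum>i. x ^ i / fact i)"
    by (rule sum_le_suminf) (use sums_exp_real[of x] assms in \<open>auto simp: sums_iff\<close>)
  then show ?thesis
    using sums_exp_real[of x] by (simp add: sums_iff)
qed

lemma sqrt_power_div_fact_le:
  "sqrt (real (n + 2 * k)) ^ (n + 2 * k) / fact k \<le> fact n * exp (2 * real n) * exp 4 ^ k"
proof -
  define m where "m = real (n + 2 * k)"
  have "sqrt m \<le> m"
  proof (cases "n + 2 * k = 0")
    case False
    then have "1 \<le> sqrt m"
      unfolding m_def by (intro real_sqrt_ge_one) linarith
    then have "sqrt m * 1 \<le> sqrt m * sqrt m"
      by (intro mult_left_mono) auto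
    then show ?thesis
      by (simp add: m_def)
  qed (simp add: m_def)
  then have "sqrt m ^ n \<le> m ^ n"
    by (intro power_mono) (auto simp: m_def)
  also have "\<dots> \<le> fact n * exp m"
    using power_div_fact_le_exp[of m n] by (simp add: m_def field_simps)
  finally have sqrt_part: "sqrt m ^ n \<le> fact n * exp m" .
  have "sqrt m ^ (n + 2 * k) / fact k = sqrt m ^ n * (m ^ k / fact k)"
    by (simp add: m_def power_add power_mult)
  also have "\<dots> \<le> (fact n * exp m) * exp m"
    using sqrt_part power_div_fact_le_exp[of m k] by (intro mult_mono) (auto simp: m_def)
  also have "\<dots> = fact n * exp (2 * real n) * exp 4 ^ k"
    by (simp add: m_def mult_exp_exp exp_of_nat_mult[symmetric] algebra_simps)
  finally show ?thesis
    by (simp add: m_def)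
qed

lemma eventually_le_power_of_root_smallo:
  fixes c :: "nat \<Rightarrow> real"
  assumes nonneg: "\<And>m. c m \<ge> 0"
    and growth: "(\<lambda>m. c m powr (1 / real m)) \<in> o(\<lambda>m. sqrt (real m))"
    and "\<epsilon> > 0"
  shows "eventually (\<lambda>m. c m \<le> (\<epsilon> * sqrt (real m)) ^ m) sequentially"
  using landau_o.smallD[OF growth \<open>\<epsilon> > 0\<close>] eventually_gt_at_top[of 0]
proof eventually_elim
  case (elim m)
  show ?case
  proof (cases "c m = 0")
    case False
    have "c m = (c m powr (1 / real m)) ^ m"
      using False nonneg[of m] elim(2) by (simp add: powr_realpow[symmetric] powr_powr)
    also have "\<dots> \<le> (\<epsilon> * sqrt (real m)) ^ m"
      using elim(1) by (intro power_mono) auto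
    finally show ?thesis .
  qed (use \<open>\<epsilon> > 0\<close> in simp)
qed

lemma summable_moment_series:
  fixes c :: "nat \<Rightarrow> real"
  assumes nonneg: "\<And>m. c m \<ge> 0"
    and growth: "(\<lambda>m. c m powr (1 / real m)) \<in> o(\<lambda>m. sqrt (real m))"
    and p: "p \<ge> 0"
  shows "summable (\<lambda>k. p ^ k / fact k * c (n + 2 * k))"
proof -
  define \<epsilon> where "\<epsilon> = sqrt (1 / (2 * (p + 1) * exp 4))"
  define q where "q = p * \<epsilon>\<^sup>2 * exp 4"
  have "\<epsilon> > 0"
    using p by (simp add: \<epsilon>_def)
  have "q = p / (2 * (p + 1))"
    using p by (simp add: q_def \<epsilon>_def)
  then have "q \<ge> 0" "q < 1"
    using p by (auto simp: divide_less_eq)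
  obtain N where N: "\<And>m. m \<ge> N \<Longrightarrow> c m \<le> (\<epsilon> * sqrt (real m)) ^ m"
    using eventually_le_power_of_root_smallo[OF nonneg growth \<open>\<epsilon> > 0\<close>]
    unfolding eventually_sequentially by blast
  have bound: "norm (p ^ k / fact k * c (n + 2 * k)) \<le> (\<epsilon> ^ n * fact n * exp (2 * real n)) * q ^ k"
    if "k \<ge> N" for k
  proof -
    have "norm (p ^ k / fact k * c (n + 2 * k)) = p ^ k * c (n + 2 * k) / fact k"
      using nonneg p by simp
    also have "\<dots> \<le> p ^ k * (\<epsilon> * sqrt (real (n + 2 * k))) ^ (n + 2 * k) / fact k"
      using N[of "n + 2 * k"] that p by (intro divide_right_mono mult_left_mono) auto
    also have "\<dots> = p ^ k * \<epsilon> ^ (n + 2 * k) * (sqrt (real (n + 2 * k)) ^ (n + 2 * k) / fact k)"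
      by (simp add: power_mult_distrib)
    also have "\<dots> \<le> p ^ k * \<epsilon> ^ (n + 2 * k) * (fact n * exp (2 * real n) * exp 4 ^ k)"
      using \<open>\<epsilon> > 0\<close> p by (intro mult_left_mono sqrt_power_div_fact_le) auto
    also have "\<dots> = (\<epsilon> ^ n * fact n * exp (2 * real n)) * q ^ k"
      by (simp add: q_def power_add power_mult power_mult_distrib)
    finally show ?thesis .
  qed
  show ?thesis
    using \<open>q \<ge> 0\<close> \<open>q < 1\<close>
    by (intro summable_comparison_test'[OF _ bound] summable_mult summable_geometric) auto
qed

lemma set_integrable_power_interpolate:
  fixes g :: "real \<Rightarrow> real"
  assumes lo: "set_integrable lborel {0..} (\<lambda>r. g r * r ^ a)"
    and hi: "set_integrable lborel {0..} (\<lambda>r. g r * r ^ (a + 2))"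
  shows "set_integrable lborel {0..} (\<lambda>r. g r * r ^ (a + 1))"
proof (rule set_integrable_bound)
  show "set_integrable lborel {0..} (\<lambda>r. \<bar>g r * r ^ a\<bar> + \<bar>g r * r ^ (a + 2)\<bar>)"
    using lo hi by (intro set_integral_add set_integrable_abs)
  have "(\<lambda>r. indicator {0..} r *\<^sub>R (g r * r ^ a)) \<in> borel_measurable lborel"
    using lo unfolding set_integrable_def by (rule borel_measurable_integrable)
  then have "(\<lambda>r. indicator {0..} r *\<^sub>R (g r * r ^ a) * r) \<in> borel_measurable lborel"
    by measurable
  then show "set_borel_measurable lborel {0..} (\<lambda>r. g r * r ^ (a + 1))"
    unfolding set_borel_measurable_def by (simp add: power_add mult_ac)
  show "AE r in lborel. r \<in> {0..} \<longrightarrow>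
      norm (g r * r ^ (a + 1)) \<le> norm (\<bar>g r * r ^ a\<bar> + \<bar>g r * r ^ (a + 2)\<bar>)"
  proof (intro AE_I2 impI)
    fix r :: real
    assume "r \<in> {0..}"
    then have "r ^ (a + 1) \<le> r ^ a + r ^ (a + 2)"
    proof (cases "r \<le> 1")
      case True
      then have "r ^ (a + 1) \<le> r ^ a"
        using \<open>r \<in> {0..}\<close> by (intro power_decreasing) auto
      then show ?thesis
        using \<open>r \<in> {0..}\<close> by (simp add: add_increasing2)
    next
      case False
      then have "r ^ (a + 1) \<le> r ^ (a + 2)"
        by (intro power_increasing) auto
      then show ?thesis
        using \<open>r \<in> {0..}\<close> by (simp add: add_increasing)
    qed
    then have "\<bar>g r\<bar> * r ^ (a + 1) \<le> \<bar>g r\<bar> * r ^ a + \<bar>g r\<bar> * r ^ (a + 2)"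
      by (metis distrib_left abs_ge_zero mult_left_mono)
    then show "norm (g r * r ^ (a + 1)) \<le> norm (\<bar>g r * r ^ a\<bar> + \<bar>g r * r ^ (a + 2)\<bar>)"
      using \<open>r \<in> {0..}\<close> by (simp add: abs_mult)
  qed
qed

lemma set_integrable_moment:
  fixes f :: "real \<Rightarrow> real"
  assumes even: "\<And>j. set_integrable lborel {0..} (\<lambda>r. f r * r ^ (2 * j + 1))"
  shows "set_integrable lborel {0..} (\<lambda>r. f r * r ^ (m + 1))"
proof (cases "even m")
  case True
  then obtain j where "m = 2 * j"
    by blast
  then show ?thesis
    using even[of j] by simp
next
  case False
  then obtain j where "m = 2 * j + 1"
    using oddE by blast
  then show ?thesis
    using set_integrable_power_interpolate[OF even[of j]] even[of "j + 1"] by (simp add: add_ac)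
qed

lemma moment_nonneg:
  assumes "\<And>r. r \<ge> 0 \<Longrightarrow> f r \<ge> 0"
  shows "moment f m \<ge> 0"
  unfolding moment_def set_lebesgue_integral_def
  using assms by (auto intro!: integral_nonneg_AE AE_I2 simp: indicator_def)

lemma set_integral_suminf:
  fixes u :: "nat \<Rightarrow> 'a \<Rightarrow> 'b::{banach, second_countable_topology}"
  assumes int: "\<And>k. set_integrable M A (u k)"
    and pointwise: "\<And>x. summable (\<lambda>k. norm (u k x))"
    and norms: "summable (\<lambda>k. LINT x:A|M. norm (u k x))"
  shows "set_integrable M A (\<lambda>x. \<Sum>k. u k x)"
    and "(\<lambda>k. LINT x:A|M. u k x) sums (LINT x:A|M. \<Sum>k. u k x)"
proof -
  define v where "v = (\<lambda>k x. indicator A x *\<^sub>R u k x)"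
  have v_int: "integrable M (v k)" for k
    using int[of k] unfolding v_def set_integrable_def .
  have "summable (\<lambda>k. norm (v k x))" for x
    using pointwise[of x] by (cases "x \<in> A") (simp_all add: v_def)
  then have v_summable: "AE x in M. summable (\<lambda>k. norm (v k x))"
    by simp
  have "(\<integral>x. norm (v k x) \<partial>M) = (LINT x:A|M. norm (u k x))" for k
    by (simp add: v_def set_lebesgue_integral_def abs_indicator)
  then have v_norms: "summable (\<lambda>k. \<integral>x. norm (v k x) \<partial>M)"
    using norms by simp
  have v_sum: "(\<Sum>k. v k x) = indicator A x *\<^sub>R (\<Sum>k. u k x)" for x
    by (cases "x \<in> A") (simp_all add: v_def)
  show "set_integrable M A (\<lambda>x. \<Sum>k. u k x)"
    using integrable_suminf[OF v_int v_summable v_norms]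
    unfolding v_sum set_integrable_def .
  show "(\<lambda>k. LINT x:A|M. u k x) sums (LINT x:A|M. \<Sum>k. u k x)"
    using sums_integral[OF v_int v_summable v_norms, unfolded v_sum]
    unfolding set_lebesgue_integral_def v_def .
qed

lemma summable_alternating_exp_series: "summable (\<lambda>k. (-1) ^ k * x ^ k / fact k :: real)"
  using sums_exp_real[of "- x"] unfolding power_minus[of x] by (rule sums_summable)

lemma summable_norm_alternating_exp_series:
  fixes a x :: real
  shows "summable (\<lambda>k. norm (a * ((-1) ^ k * x ^ k / fact k)))"
proof -
  have "summable (\<lambda>k. \<bar>x\<bar> ^ k / fact k)"
    using sums_exp_real by (rule sums_summable)
  then have "summable (\<lambda>k. \<bar>a\<bar> * (\<bar>x\<bar> ^ k / fact k))"
    by (rule summable_mult)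
  then show ?thesis
    by (simp add: abs_mult power_abs)
qed

lemma exp_series_term_eq:
  fixes f :: "real \<Rightarrow> real"
  shows "f r * r ^ (n + 1) * ((-1) ^ k * (p * r\<^sup>2) ^ k / fact k)
    = (-1) ^ k * p ^ k / fact k * (f r * r ^ (n + 2 * k + 1))"
  by (simp add: power_mult_distrib power_add power_mult)

lemma set_integral_norm_exp_series_term:
  fixes f :: "real \<Rightarrow> real"
  assumes f: "\<And>r. r \<ge> 0 \<Longrightarrow> f r \<ge> 0" and p: "p \<ge> 0"
  shows "(LINT r:{0..}|lborel. norm (f r * r ^ (n + 1) * ((-1) ^ k * (p * r\<^sup>2) ^ k / fact k)))
    = p ^ k / fact k * moment f (n + 2 * k) / (2 * pi)"
proof -
  have "norm (f r * r ^ (n + 1) * ((-1) ^ k * (p * r\<^sup>2) ^ k / fact k))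
      = p ^ k / fact k * (f r * r ^ (n + 2 * k + 1))" if "r \<ge> 0" for r
    unfolding exp_series_term_eq using f[OF that] p that by (simp add: abs_mult)
  then have "(LINT r:{0..}|lborel. norm (f r * r ^ (n + 1) * ((-1) ^ k * (p * r\<^sup>2) ^ k / fact k)))
      = (LINT r:{0..}|lborel. p ^ k / fact k * (f r * r ^ (n + 2 * k + 1)))"
    by (intro set_lebesgue_integral_cong) auto
  then show ?thesis
    by (simp add: moment_def)
qed

theorem lemma7:
  fixes f :: "real \<Rightarrow> real" and F :: real and n :: nat and p :: real
  assumes bound: "\<And>r. r \<ge> 0 \<Longrightarrow> 0 \<le> f r \<and> f r \<le> F"
    and c0_exists: "set_integrable lborel {0..} (\<lambda>r. f r * r)"
    and c0_pos: "moment f 0 > 0"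
    and even_exist: "\<And>m. set_integrable lborel {0..} (\<lambda>r. f r * r ^ (2 * m + 1))"
    and growth: "(\<lambda>m. moment f m powr (1 / real m)) \<in> o(\<lambda>m. sqrt (real m))"
    and p: "p \<ge> 0"
  shows "(\<forall>k. set_integrable lborel {0..}
            (\<lambda>r. f r * r ^ (n + 1) * ((-1) ^ k * (p * r\<^sup>2) ^ k / fact k)))
    \<and> set_integrable lborel {0..}
            (\<lambda>r. f r * r ^ (n + 1) * (\<Sum>k. (-1) ^ k * (p * r\<^sup>2) ^ k / fact k))
    \<and> (\<lambda>k. 2 * pi * (LINT r:{0..}|lborel. f r * r ^ (n + 1) * ((-1) ^ k * (p * r\<^sup>2) ^ k / fact k)))
        sums (2 * pi * (LINT r:{0..}|lborel. f r * r ^ (n + 1) * (\<Sum>k. (-1) ^ k * (p * r\<^sup>2) ^ k / fact k)))"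
proof -
  define u where "u = (\<lambda>k r. f r * r ^ (n + 1) * ((-1) ^ k * (p * r\<^sup>2) ^ k / fact k))"
  have int: "set_integrable lborel {0..} (u k)" for k
    unfolding u_def exp_series_term_eq
    using set_integrable_moment[OF even_exist] by (rule set_integrable_mult_right)
  have pointwise: "summable (\<lambda>k. norm (u k r))" for r
    unfolding u_def by (rule summable_norm_alternating_exp_series)
  have f_nonneg: "f r \<ge> 0" if "r \<ge> 0" for r
    using bound[OF that] by simp
  have "summable (\<lambda>k. p ^ k / fact k * moment f (n + 2 * k) / (2 * pi))"
    using summable_moment_series[OF moment_nonneg[OF f_nonneg] growth p] by (rule summable_divide)
  moreover have "(LINT r:{0..}|lborel. norm (u k r)) = p ^ k / fact k * moment f (n + 2 * k) / (2 * pi)" for k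
    unfolding u_def by (rule set_integral_norm_exp_series_term[OF f_nonneg p])
  ultimately have norms: "summable (\<lambda>k. LINT r:{0..}|lborel. norm (u k r))"
    by simp
  have sum_u: "(\<Sum>k. u k r) = f r * r ^ (n + 1) * (\<Sum>k. (-1) ^ k * (p * r\<^sup>2) ^ k / fact k)" for r
    unfolding u_def by (rule suminf_mult[OF summable_alternating_exp_series])
  note exchange = set_integral_suminf[OF int pointwise norms, unfolded sum_u]
  show ?thesis
    using int exchange(1) sums_mult[OF exchange(2), of "2 * pi"] unfolding u_def by blast
qed

end
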